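(* Let $P$ be a pattern, $S$ a schedule for $P$, and $L$ the relation set produced by the restriction generation procedure. Every pair in $L$ has the form $(S[a],S[b])$ with $a<b$. For each $k\in\{0,\dots,n-1\}$ such that some pair $(S[z],S[k])$ lies in $L$, let $c_k$ be the largest index $z$ with $(S[z],S[k])\in L$, and let $L'=\{(S[c_k],S[k])\}$ be the set of these chosen pairs. Then for every map $f:V(P)\to\mathbb{R}$, if $f(S[c_k])>f(S[k])$ for every chosen pair $(S[c_k],S[k])\in L'$, then $f(u)>f(w)$ for every $(u,w)\in L$.
   Context: A pattern $P$ is a finite simple connected graph on $n$ labeled vertices; $\mathrm{Aut}(P)$ is its automorphism group (bijections $V(P)\to V(P)$ preserving adjacency and non-adjacency). A schedule for $P$ is a sequence $S=(S[0],\dots,S[n-1])$ listing every vertex of $P$ exactly once such that each $S[k]$ with $k\ge 1$ is adjacent in $P$ to some $S[j]$ with $j<k$. Restriction generation procedure: set $A_0=\mathrm{Aut}(P)$ and, for $i=0,1,\dots,n-1$, add to $L$ every pair $(S[i],x(S[i]))$ with $x\in A_i$ and $x(S[i])\neq S[i]$, then set $A_{i+1}=\{x\in A_i : x(S[i])=S[i]\}$. Equivalently, $L=\{(S[i],x(S[i])) : 0\le i<n,\ x\in\mathrm{Aut}(P),\ x(S[j])=S[j]\text{ for all } j<i,\ x(S[i])\ne S[i]\}$. *)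

theory Defs
  imports Complex_Main
begin

definition pattern :: "'a set \<Rightarrow> ('a \<Rightarrow> 'a \<Rightarrow> bool) \<Rightarrow> bool" where
  "pattern V E \<longleftrightarrow> finite V \<and> V \<noteq> {}
     \<and> (\<forall>u v. E u v \<longrightarrow> u \<in> V \<and> v \<in> V)
     \<and> (\<forall>u v. E u v \<longrightarrow> E v u)
     \<and> (\<forall>u. \<not> E u u)
     \<and> (\<forall>u\<in>V. \<forall>v\<in>V. (u, v) \<in> {(a, b). E a b}\<^sup>*)"

definition aut :: "'a set \<Rightarrow> ('a \<Rightarrow> 'a \<Rightarrow> bool) \<Rightarrow> ('a \<Rightarrow> 'a) set" where
  "aut V E = {x. bij_betw x V V \<and> (\<forall>v. v \<notin> V \<longrightarrow> x v = v)
               \<and> (\<forall>u\<in>V. \<forall>v\<in>V. E u v \<longleftrightarrow> E (x u) (x v))}"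

definition schedule :: "'a set \<Rightarrow> ('a \<Rightarrow> 'a \<Rightarrow> bool) \<Rightarrow> 'a list \<Rightarrow> bool" where
  "schedule V E S \<longleftrightarrow> distinct S \<and> set S = V
     \<and> (\<forall>k. 0 < k \<and> k < length S \<longrightarrow> (\<exists>j<k. E (S ! j) (S ! k)))"

definition restrictions :: "'a set \<Rightarrow> ('a \<Rightarrow> 'a \<Rightarrow> bool) \<Rightarrow> 'a list \<Rightarrow> ('a \<times> 'a) set" where
  "restrictions V E S = {(S ! i, x (S ! i)) | i x. i < length S \<and> x \<in> aut V E
       \<and> (\<forall>j<i. x (S ! j) = S ! j) \<and> x (S ! i) \<noteq> S ! i}"

definition chosen_index :: "('a \<times> 'a) set \<Rightarrow> 'a list \<Rightarrow> nat \<Rightarrow> nat" where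
  "chosen_index L S k = Max {z. z < length S \<and> (S ! z, S ! k) \<in> L}"

definition chosen_pairs :: "('a \<times> 'a) set \<Rightarrow> 'a list \<Rightarrow> ('a \<times> 'a) set" where
  "chosen_pairs L S = {(S ! chosen_index L S k, S ! k) | k. k < length S
       \<and> (\<exists>z<length S. (S ! z, S ! k) \<in> L)}"

end

theory Submission
  imports Defs
begin

text \<open>Pairs of \<open>L\<close> with a common second entry are linked: if \<open>x\<close> fixes \<open>S[0..a-1]\<close>
  and maps \<open>S[a]\<close> to \<open>S[b]\<close>, and \<open>y\<close> fixes \<open>S[0..c-1]\<close> and maps \<open>S[c]\<close> to \<open>S[b]\<close> with
  \<open>a < c\<close>, then \<open>y\<^sup>-\<^sup>1 \<circ> x\<close> fixes \<open>S[0..a-1]\<close> and maps \<open>S[a]\<close> to \<open>S[c]\<close>. So a pair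
  \<open>(S[a], S[b])\<close> of \<open>L\<close> with \<open>a < c\<^sub>b\<close> splits into \<open>(S[a], S[c\<^sub>b])\<close>, whose target comes
  earlier in \<open>S\<close>, and the chosen pair \<open>(S[c\<^sub>b], S[b])\<close>; strong induction on the position
  of the target finishes the proof.\<close>

lemma aut_comp:
  assumes "x \<in> aut V E" "y \<in> aut V E"
  shows "y \<circ> x \<in> aut V E"
proof -
  have bx: "bij_betw x V V" and ox: "\<forall>v. v \<notin> V \<longrightarrow> x v = v"
    and ax: "\<forall>u\<in>V. \<forall>v\<in>V. E u v \<longleftrightarrow> E (x u) (x v)" using assms(1) by (auto simp: aut_def)
  have by': "bij_betw y V V" and oy: "\<forall>v. v \<notin> V \<longrightarrow> y v = v"
    and ay: "\<forall>u\<in>V. \<forall>v\<in>V. E u v \<longleftrightarrow> E (y u) (y v)" using assms(2) by (auto simp: aut_def)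
  have "\<And>u. u \<in> V \<Longrightarrow> x u \<in> V" using bx bij_betwE by blast
  with ax ay have "\<forall>u\<in>V. \<forall>v\<in>V. E u v \<longleftrightarrow> E ((y \<circ> x) u) ((y \<circ> x) v)" by simp
  moreover have "bij_betw (y \<circ> x) V V" using bij_betw_trans[OF bx by'] .
  ultimately show ?thesis using ox oy by (simp add: aut_def)
qed

lemma aut_left_inverse:
  assumes "x \<in> aut V E"
  obtains y where "y \<in> aut V E" "\<And>v. v \<in> V \<Longrightarrow> y (x v) = v"
proof -
  have bx: "bij_betw x V V" and ax: "\<forall>u\<in>V. \<forall>v\<in>V. E u v \<longleftrightarrow> E (x u) (x v)"
    using assms by (auto simp: aut_def)
  define y where "y = (\<lambda>v. if v \<in> V then inv_into V x v else v)"
  have by': "bij_betw y V V"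
    using bij_betw_inv_into[OF bx] by (rule bij_betw_cong[THEN iffD1, rotated]) (simp add: y_def)
  have yV: "\<And>u. u \<in> V \<Longrightarrow> y u \<in> V" using by' bij_betwE by blast
  have xy: "\<And>u. u \<in> V \<Longrightarrow> x (y u) = u"
    using bx by (simp add: y_def bij_betw_def f_inv_into_f)
  have "\<forall>u\<in>V. \<forall>v\<in>V. E u v \<longleftrightarrow> E (y u) (y v)" using ax yV xy by metis
  with by' have "y \<in> aut V E" by (auto simp: aut_def y_def)
  moreover have "\<And>v. v \<in> V \<Longrightarrow> y (x v) = v"
    using bx by (auto simp: y_def bij_betw_def bij_betwE)
  ultimately show thesis by (rule that)
qed

lemma mem_restrictions_iff:
  "(u, w) \<in> restrictions V E S \<longleftrightarrow> (\<exists>i<length S. \<exists>x\<in>aut V E.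
     u = S ! i \<and> w = x (S ! i) \<and> (\<forall>j<i. x (S ! j) = S ! j) \<and> x (S ! i) \<noteq> S ! i)"
  unfolding restrictions_def by blast

lemma restrictions_nth_iff:
  assumes "distinct S" and "a < length S"
  shows "(S ! a, S ! b) \<in> restrictions V E S \<longleftrightarrow>
     (\<exists>x\<in>aut V E. (\<forall>j<a. x (S ! j) = S ! j) \<and> x (S ! a) = S ! b \<and> S ! b \<noteq> S ! a)"
proof
  assume "(S ! a, S ! b) \<in> restrictions V E S"
  then obtain i x where i: "i < length S" "x \<in> aut V E" "S ! a = S ! i" "S ! b = x (S ! i)"
    "\<forall>j<i. x (S ! j) = S ! j" "x (S ! i) \<noteq> S ! i"
    unfolding mem_restrictions_iff by blast
  have "i = a" using i(1,3) assms by (simp add: nth_eq_iff_index_eq)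
  with i show "\<exists>x\<in>aut V E. (\<forall>j<a. x (S ! j) = S ! j) \<and> x (S ! a) = S ! b \<and> S ! b \<noteq> S ! a"
    by auto
next
  assume "\<exists>x\<in>aut V E. (\<forall>j<a. x (S ! j) = S ! j) \<and> x (S ! a) = S ! b \<and> S ! b \<noteq> S ! a"
  then obtain x where "x \<in> aut V E" "\<forall>j<a. x (S ! j) = S ! j" "x (S ! a) = S ! b" "S ! b \<noteq> S ! a"
    by blast
  with assms(2) show "(S ! a, S ! b) \<in> restrictions V E S"
    unfolding mem_restrictions_iff by (intro exI[of _ a] conjI bexI[of _ x]) auto
qed

text \<open>An automorphism fixing \<open>S[0..i-1]\<close> permutes the remaining vertices, so it cannot move
  \<open>S[i]\<close> to an earlier position.\<close>
lemma restrictions_forward: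
  assumes "distinct S" "set S = V" and "(u, w) \<in> restrictions V E S"
  shows "\<exists>a b. a < b \<and> b < length S \<and> u = S ! a \<and> w = S ! b"
proof -
  obtain i x where i: "u = S ! i" "w = x (S ! i)" "i < length S" "x \<in> aut V E"
    "\<forall>j<i. x (S ! j) = S ! j" "x (S ! i) \<noteq> S ! i"
    using assms(3) unfolding mem_restrictions_iff by blast
  have bx: "bij_betw x V V" using i(4) by (auto simp: aut_def)
  have "x (S ! i) \<in> set S" using i(3) assms(2) bx bij_betwE by fastforce
  then obtain b where b: "b < length S" "x (S ! i) = S ! b" by (metis in_set_conv_nth)
  have "\<not> b < i"
  proof
    assume "b < i"
    then have "x (S ! b) = x (S ! i)" using i(5) b(2) by auto
    then have "S ! b = S ! i"
      using bx b(1) i(3) assms(2) by (auto simp: bij_betw_def inj_on_def)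
    with \<open>b < i\<close> i(3) assms(1) show False by (simp add: nth_eq_iff_index_eq)
  qed
  moreover have "b \<noteq> i" using b i(6) by auto
  ultimately show ?thesis using i b by (intro exI[of _ i] exI[of _ b]) auto
qed

lemma restrictions_nth_less:
  assumes "distinct S" "set S = V" "a < length S" "b < length S"
    and "(S ! a, S ! b) \<in> restrictions V E S"
  shows "a < b"
  using restrictions_forward[OF assms(1,2,5)] assms(1,3,4) by (auto simp: nth_eq_iff_index_eq)

lemma restrictions_nth_trans:
  assumes "distinct S" "set S = V" "a < c" "c < length S"
    and ab: "(S ! a, S ! b) \<in> restrictions V E S" and cb: "(S ! c, S ! b) \<in> restrictions V E S"
  shows "(S ! a, S ! c) \<in> restrictions V E S"
proof -
  have a: "a < length S" using assms(3,4) by simp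
  have inV: "\<And>j. j < length S \<Longrightarrow> S ! j \<in> V" using assms(2) by auto
  obtain x where x: "x \<in> aut V E" "\<forall>j<a. x (S ! j) = S ! j" "x (S ! a) = S ! b"
    using restrictions_nth_iff[OF assms(1) a] ab by blast
  obtain y where y: "y \<in> aut V E" "\<forall>j<c. y (S ! j) = S ! j" "y (S ! c) = S ! b"
    using restrictions_nth_iff[OF assms(1,4)] cb by blast
  obtain z where z: "z \<in> aut V E" "\<And>v. v \<in> V \<Longrightarrow> z (y v) = v"
    using aut_left_inverse[OF y(1)] by blast
  have "\<forall>j<a. (z \<circ> x) (S ! j) = S ! j"
  proof (intro allI impI)
    fix j assume "j < a"
    then have "j < c" "j < length S" using assms(3,4) by auto
    then have "z (y (S ! j)) = S ! j" using z(2) inV by blast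
    then show "(z \<circ> x) (S ! j) = S ! j" using x(2) y(2) \<open>j < a\<close> \<open>j < c\<close> by simp
  qed
  moreover have "(z \<circ> x) (S ! a) = S ! c"
  proof -
    have "z (y (S ! c)) = S ! c" using z(2) inV assms(4) by blast
    then show ?thesis using x(3) y(3) by simp
  qed
  moreover have "S ! c \<noteq> S ! a" using assms(1,3,4) by (simp add: nth_eq_iff_index_eq)
  ultimately show ?thesis
    using restrictions_nth_iff[OF assms(1) a] aut_comp[OF x(1) z(1)] by blast
qed

lemma greater_of_greatest_predecessors:
  fixes R :: "nat \<Rightarrow> nat \<Rightarrow> bool" and g :: "nat \<Rightarrow> 'b :: order"
  assumes forward: "\<And>a b. R a b \<Longrightarrow> a < b"
    and trans: "\<And>a b c. R a b \<Longrightarrow> R c b \<Longrightarrow> a < c \<Longrightarrow> R a c"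
    and chosen: "\<And>a b. R a b \<Longrightarrow> g (Max {z. R z b}) > g b"
    and "R a b"
  shows "g a > g b"
  using \<open>R a b\<close>
proof (induction b arbitrary: a rule: less_induct)
  case (less b)
  define c where "c = Max {z. R z b}"
  have fin: "finite {z. R z b}" using forward by (auto intro: finite_subset[of _ "{..<b}"])
  have "R c b" using Max_in[OF fin] less.prems unfolding c_def by blast
  have "a \<le> c" using Max_ge[OF fin] less.prems unfolding c_def by blast
  have gcb: "g c > g b" using chosen[OF less.prems] unfolding c_def .
  show ?case
  proof (cases "a = c")
    case False
    with \<open>a \<le> c\<close> have "R a c" using trans[OF less.prems \<open>R c b\<close>] by simp
    then have "g a > g c" using less.IH[OF forward[OF \<open>R c b\<close>]] by blast
    with gcb show ?thesis using less_trans by blast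
  qed (use gcb in simp)
qed

theorem theorem2:
  fixes V :: "'a set" and E :: "'a \<Rightarrow> 'a \<Rightarrow> bool" and S :: "'a list"
  assumes "pattern V E" and "schedule V E S"
  shows "(\<forall>(u, w) \<in> restrictions V E S.
            \<exists>a b. a < b \<and> b < length S \<and> u = S ! a \<and> w = S ! b)
       \<and> (\<forall>f :: 'a \<Rightarrow> real.
            (\<forall>(u, w) \<in> chosen_pairs (restrictions V E S) S. f u > f w)
            \<longrightarrow> (\<forall>(u, w) \<in> restrictions V E S. f u > f w))"
proof (intro conjI allI impI)
  let ?L = "restrictions V E S"
  let ?R = "\<lambda>a b. a < length S \<and> b < length S \<and> (S ! a, S ! b) \<in> ?L"
  have S: "distinct S" "set S = V" using assms(2) by (auto simp: schedule_def)
  show "\<forall>(u, w) \<in> ?L. \<exists>a b. a < b \<and> b < length S \<and> u = S ! a \<and> w = S ! b"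
    using restrictions_forward[OF S] by blast
  fix f :: "'a \<Rightarrow> real"
  assume hf: "\<forall>(u, w) \<in> chosen_pairs ?L S. f u > f w"
  have "f (S ! a) > f (S ! b)" if "?R a b" for a b
  proof (rule greater_of_greatest_predecessors[where R = ?R and g = "\<lambda>i. f (S ! i)"])
    show "\<And>a b. ?R a b \<Longrightarrow> a < b" using restrictions_nth_less[OF S] by blast
    show "\<And>a b c. ?R a b \<Longrightarrow> ?R c b \<Longrightarrow> a < c \<Longrightarrow> ?R a c"
      using restrictions_nth_trans[OF S] less_trans by blast
  next
    fix a b assume "?R a b"
    then have "Max {z. ?R z b} = chosen_index ?L S b" by (simp add: chosen_index_def)
    moreover have "(S ! chosen_index ?L S b, S ! b) \<in> chosen_pairs ?L S"
      using \<open>?R a b\<close> unfolding chosen_pairs_def by blast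
    ultimately show "f (S ! Max {z. ?R z b}) > f (S ! b)" using hf by auto
  qed (fact that)
  show "\<forall>(u, w) \<in> ?L. f u > f w"
  proof clarify
    fix u w assume "(u, w) \<in> ?L"
    moreover obtain a b where "a < b" "b < length S" "u = S ! a" "w = S ! b"
      using restrictions_forward[OF S \<open>(u, w) \<in> ?L\<close>] by blast
    ultimately show "f u > f w" using \<open>?R a b \<Longrightarrow> f (S ! a) > f (S ! b)\<close> by auto
  qed
qed

end
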